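(* Let $\mathcal{S}_m$ be the set of pairs $(R,\theta)$ with $R\in\mathbb{R}^{m\times m}$, $\theta\in\mathbb{R}^m$, $R=R'=R^2$ and $R\theta=0$. Define the loss $L((R_1,\theta_1),(R_2,\theta_2))=\|R_1-R_2\|^2+\|\theta_1-\theta_2\|^2$, with $\|A\|^2=\mathrm{Tr}(AA')$. Let $P_n$ be a probability distribution on $\mathcal{S}_m$ (the posterior) under which $\|\theta_2\|^2$ is integrable, and let $\bar R$ and $\bar\theta$ be the means of $R_2$ and $\theta_2$ under $P_n$. Let $2\bar R-\bar\theta\bar\theta'=\sum_{j=1}^m\lambda_jU_jU_j'$ with $\lambda_1\ge\dots\ge\lambda_m$ and $U_1,\dots,U_m$ orthonormal be a singular value (spectral) decomposition. Define $f(R,\theta)=\int L((R,\theta),(R_2,\theta_2))\,dP_n(R_2,\theta_2)$ for $(R,\theta)\in\mathcal{S}_m$. Then $f$ is minimized over $\mathcal{S}_m$ by $R=\sum_{j=1}^kU_jU_j'$ and $\theta=(I-R)\bar\theta$, where $k\in\{0,1,\dots,m\}$ minimizes $k-\sum_{j=1}^k\lambda_j$. The minimizer is unique if and only if there is a unique minimizing $k$ and $\lambda_k>\lambda_{k+1}$ for that $k$.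
   Context: $\mathcal{S}_m$ parametrizes affine subspaces of $\mathbb{R}^m$: $R$ is the projection matrix of the parallel linear subspace and $\theta$ is the projection of the origin onto the affine subspace. *)

theory Defs
  imports "HOL-Analysis.Analysis" "HOL-Probability.Probability"
begin

definition outer :: "real^'m \<Rightarrow> real^'m \<Rightarrow> real^'m^'m" where
  "outer u v = (\<chi> i j. u $ i * v $ j)"

definition frob2 :: "real^'m^'m \<Rightarrow> real" where
  "frob2 A = trace (A ** transpose A)"

text \<open>The parameter space S_m of affine subspaces.\<close>
definition Sm :: "((real^'m^'m) \<times> (real^'m)) set" where
  "Sm = {(R, \<theta>). R = transpose R \<and> R ** R = R \<and> R *v \<theta> = 0}"

definition loss :: "(real^'m^'m) \<times> (real^'m) \<Rightarrow> (real^'m^'m) \<times> (real^'m) \<Rightarrow> real" where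
  "loss p q = frob2 (fst p - fst q) + (norm (snd p - snd q))\<^sup>2"

definition post_risk :: "((real^'m^'m) \<times> (real^'m)) measure \<Rightarrow> (real^'m^'m) \<times> (real^'m) \<Rightarrow> real" where
  "post_risk P p = (\<integral>q. loss p q \<partial>P)"


definition kobj :: "(nat \<Rightarrow> real) \<Rightarrow> nat \<Rightarrow> real" where
  "kobj lam k = real k - (\<Sum>j=1..k. lam j)"

definition is_kmin :: "(nat \<Rightarrow> real) \<Rightarrow> nat \<Rightarrow> nat \<Rightarrow> bool" where
  "is_kmin lam m k \<longleftrightarrow> k \<le> m \<and> (\<forall>k'\<le>m. kobj lam k \<le> kobj lam k')"

definition projU :: "(nat \<Rightarrow> real^'m) \<Rightarrow> nat \<Rightarrow> real^'m^'m" where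
  "projU U k = (\<Sum>j=1..k. outer (U j) (U j))"

end

theory Submission
  imports Defs
begin

text \<open>For \<open>(R, \<theta>) \<in> Sm\<close> the loss is quadratic, so the posterior risk is
\<open>\<parallel>R\<parallel>\<^sup>2 + \<parallel>\<theta>\<parallel>\<^sup>2 - 2 R \<bullet> R\<^sub>m - 2 \<theta> \<bullet> \<theta>\<^sub>m\<close> plus a constant, where \<open>R\<^sub>m\<close> and \<open>\<theta>\<^sub>m\<close> are the
posterior means. As \<open>R\<close> is an orthogonal projection, \<open>\<parallel>R\<parallel>\<^sup>2 = trace R = \<Sum>\<^sub>j U\<^sub>j \<bullet> R U\<^sub>j\<close>,
and \<open>R \<theta> = 0\<close> lets the \<open>\<theta>\<close>-part be completed to a square. With the spectral decomposition
of \<open>2 R\<^sub>m - \<theta>\<^sub>m \<theta>\<^sub>m'\<close> the risk becomes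
\<open>\<Sum>\<^sub>j (1 - \<lambda>\<^sub>j) (U\<^sub>j \<bullet> R U\<^sub>j) + \<parallel>\<theta> - (I - R) \<theta>\<^sub>m\<parallel>\<^sup>2\<close> plus a constant.
Each \<open>U\<^sub>j \<bullet> R U\<^sub>j\<close> lies in \<open>[0, 1]\<close>, so the sum is at least \<open>\<Sum>\<^sub>j min 0 (1 - \<lambda>\<^sub>j)\<close>; this is
also the minimum of \<open>k - (\<lambda>\<^sub>1 + \<dots> + \<lambda>\<^sub>k)\<close>, and the projection onto the first \<open>k\<close> eigenvectors
attains it for every minimizing \<open>k\<close>. Equality forces \<open>U\<^sub>j \<bullet> R U\<^sub>j\<close> to be \<open>1\<close> when \<open>\<lambda>\<^sub>j > 1\<close>
and \<open>0\<close> when \<open>\<lambda>\<^sub>j < 1\<close>, so the minimizer is unique exactly when no \<open>\<lambda>\<^sub>j\<close> equals \<open>1\<close>;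
for sorted \<open>\<lambda>\<close> this is the stated condition on the minimizing \<open>k\<close>.\<close>

lemma sum_atLeastAtMost_split:
  assumes "k \<le> n"
  shows "(\<Sum>j=1..n. f j) = (\<Sum>j=1..k. f j) + (\<Sum>j=Suc k..n. f j :: 'a::comm_monoid_add)"
proof -
  have "{1..n} = {1..k} \<union> {Suc k..n}" using assms by auto
  then show ?thesis by (simp add: sum.union_disjoint ivl_disj_int)
qed

lemma kobj_minus_lower_bound:
  assumes "k \<le> n"
  shows "kobj lam k - (\<Sum>j=1..n. min 0 (1 - lam j)) =
     (\<Sum>j=1..k. (1 - lam j) - min 0 (1 - lam j)) + (\<Sum>j=Suc k..n. - min 0 (1 - lam j))"
  using sum_atLeastAtMost_split[OF assms, of "\<lambda>j. min 0 (1 - lam j)"]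
  by (simp add: kobj_def sum_subtractf sum_negf)

lemma kobj_lower_bound:
  assumes "k \<le> n"
  shows "(\<Sum>j=1..n. min 0 (1 - lam j)) \<le> kobj lam k"
proof -
  have "0 \<le> (\<Sum>j=1..k. (1 - lam j) - min 0 (1 - lam j))" "0 \<le> (\<Sum>j=Suc k..n. - min 0 (1 - lam j))"
    by (simp_all add: sum_nonneg)
  then show ?thesis using kobj_minus_lower_bound[OF assms, of lam] by linarith
qed

lemma kobj_eq_lower_bound_iff:
  assumes "k \<le> n"
  shows "kobj lam k = (\<Sum>j=1..n. min 0 (1 - lam j)) \<longleftrightarrow>
     (\<forall>j\<in>{1..k}. 1 \<le> lam j) \<and> (\<forall>j\<in>{Suc k..n}. lam j \<le> 1)"
proof -
  have "kobj lam k = (\<Sum>j=1..n. min 0 (1 - lam j)) \<longleftrightarrow>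
     (\<Sum>j=1..k. (1 - lam j) - min 0 (1 - lam j)) = 0 \<and> (\<Sum>j=Suc k..n. - min 0 (1 - lam j)) = 0"
    using kobj_minus_lower_bound[OF assms, of lam]
      sum_nonneg[of "{1..k}" "\<lambda>j. (1 - lam j) - min 0 (1 - lam j)"]
      sum_nonneg[of "{Suc k..n}" "\<lambda>j. - min 0 (1 - lam j)"] by (smt (verit))
  also have "\<dots> \<longleftrightarrow> (\<forall>j\<in>{1..k}. (1 - lam j) - min 0 (1 - lam j) = 0) \<and> (\<forall>j\<in>{Suc k..n}. - min 0 (1 - lam j) = 0)"
    by (simp add: sum_nonneg_eq_0_iff)
  also have "\<dots> \<longleftrightarrow> (\<forall>j\<in>{1..k}. 1 \<le> lam j) \<and> (\<forall>j\<in>{Suc k..n}. lam j \<le> 1)"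
    by (auto simp: min_def)
  finally show ?thesis .
qed

lemma antimono_on_threshold:
  fixes lam :: "nat \<Rightarrow> 'a::order"
  assumes "antimono_on {1..n} lam" and "\<And>a b. Q a \<Longrightarrow> a \<le> b \<Longrightarrow> Q b"
  obtains K where "K \<le> n" "\<forall>j\<in>{1..n}. Q (lam j) \<longleftrightarrow> j \<le> K"
proof
  define S where "S = {0} \<union> {j\<in>{1..n}. Q (lam j)}"
  have "finite S" by (simp add: S_def)
  then have mem: "Max S \<in> S" by (rule Max_in) (simp add: S_def)
  then show "Max S \<le> n" by (auto simp: S_def)
  show "\<forall>j\<in>{1..n}. Q (lam j) \<longleftrightarrow> j \<le> Max S"
  proof
    fix j assume j: "j \<in> {1..n}"
    show "Q (lam j) \<longleftrightarrow> j \<le> Max S"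
    proof
      assume "Q (lam j)" then show "j \<le> Max S" using j \<open>finite S\<close> by (simp add: S_def)
    next
      assume "j \<le> Max S"
      then have "Max S \<in> {1..n}" "Q (lam (Max S))" using mem j by (auto simp: S_def)
      moreover have "lam (Max S) \<le> lam j"
        using assms(1) j \<open>j \<le> Max S\<close> \<open>Max S \<in> {1..n}\<close> by (simp add: monotone_on_def)
      ultimately show "Q (lam j)" using assms(2) by blast
    qed
  qed
qed

lemma is_kmin_iff:
  assumes "antimono_on {1..n} lam"
  shows "is_kmin lam n k \<longleftrightarrow> k \<le> n \<and> (\<forall>j\<in>{1..k}. 1 \<le> lam j) \<and> (\<forall>j\<in>{Suc k..n}. lam j \<le> 1)"
proof -
  define V where "V = (\<Sum>j=1..n. min 0 (1 - lam j))"
  obtain K where K: "K \<le> n" "\<forall>j\<in>{1..n}. 1 < lam j \<longleftrightarrow> j \<le> K"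
    using assms by (rule antimono_on_threshold[of n lam "(<) 1"]) simp
  have "1 \<le> lam j" if "j \<in> {1..K}" for j
    using K(1) K(2)[rule_format, of j] that by auto
  moreover have "lam j \<le> 1" if "j \<in> {Suc K..n}" for j
    using K(2)[rule_format, of j] that by auto
  ultimately have "kobj lam K = V"
    unfolding V_def kobj_eq_lower_bound_iff[OF K(1)] by blast
  have "is_kmin lam n k \<longleftrightarrow> k \<le> n \<and> kobj lam k = V"
  proof
    assume "is_kmin lam n k"
    then have "k \<le> n" "kobj lam k \<le> kobj lam K" using K(1) unfolding is_kmin_def by auto
    then show "k \<le> n \<and> kobj lam k = V"
      using \<open>kobj lam K = V\<close> kobj_lower_bound[of k n lam] unfolding V_def by linarith
  next
    assume "k \<le> n \<and> kobj lam k = V"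
    then show "is_kmin lam n k" using kobj_lower_bound[of _ n lam] unfolding is_kmin_def V_def by auto
  qed
  then show ?thesis unfolding V_def using kobj_eq_lower_bound_iff by blast
qed

text \<open>With \<open>Q = (<) 1\<close> and \<open>Q = (\<le>) 1\<close> this yields the smallest and the largest minimizing \<open>k\<close>.\<close>
lemma is_kmin_threshold:
  assumes "antimono_on {1..n} lam"
    and "\<And>a b. Q a \<Longrightarrow> a \<le> b \<Longrightarrow> Q b" "\<And>x. x < 1 \<Longrightarrow> \<not> Q x" "\<And>x. 1 < x \<Longrightarrow> Q x"
  obtains K where "is_kmin lam n K" "\<forall>j\<in>{1..n}. Q (lam j) \<longleftrightarrow> j \<le> K"
proof -
  obtain K where K: "K \<le> n" "\<forall>j\<in>{1..n}. Q (lam j) \<longleftrightarrow> j \<le> K"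
    using assms(1,2) by (rule antimono_on_threshold)
  have "1 \<le> lam j" if "j \<in> {1..K}" for j
  proof -
    have "Q (lam j)" using K(1) K(2)[rule_format, of j] that by auto
    then show ?thesis using assms(3) not_less by blast
  qed
  moreover have "lam j \<le> 1" if "j \<in> {Suc K..n}" for j
  proof -
    have "\<not> Q (lam j)" using K(2)[rule_format, of j] that by auto
    then show ?thesis using assms(4) not_less by blast
  qed
  ultimately have "is_kmin lam n K" using K(1) by (simp add: is_kmin_iff[OF assms(1)])
  then show thesis using K(2) by (rule that)
qed

lemma two_kmins_if_eigenvalue_one:
  assumes "antimono_on {1..n} lam" "j \<in> {1..n}" "lam j = 1"
  obtains K0 K1 where "is_kmin lam n K0" "is_kmin lam n K1" "K0 < j" "j \<le> K1"
proof -
  obtain K0 where K0: "is_kmin lam n K0" "\<forall>j\<in>{1..n}. 1 < lam j \<longleftrightarrow> j \<le> K0"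
    using assms(1) by (rule is_kmin_threshold[of n lam "(<) 1"]) auto
  obtain K1 where K1: "is_kmin lam n K1" "\<forall>j\<in>{1..n}. 1 \<le> lam j \<longleftrightarrow> j \<le> K1"
    using assms(1) by (rule is_kmin_threshold[of n lam "(\<le>) 1"]) auto
  have "K0 < j" using K0(2)[rule_format, OF assms(2)] assms(3) by simp
  moreover have "j \<le> K1" using K1(2)[rule_format, OF assms(2)] assms(3) by simp
  ultimately show thesis using K0(1) K1(1) that by blast
qed

lemma is_kminD:
  assumes "antimono_on {1..n} lam" "is_kmin lam n k"
  shows "k \<le> n" "\<And>j. j \<in> {1..k} \<Longrightarrow> 1 \<le> lam j" "\<And>j. j \<in> {Suc k..n} \<Longrightarrow> lam j \<le> 1"
  using assms(2) unfolding is_kmin_iff[OF assms(1)] by blast+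

lemma unique_kmin_iff:
  assumes mono: "antimono_on {1..n} lam"
  shows "((\<exists>!k. is_kmin lam n k) \<and> (\<forall>k. is_kmin lam n k \<longrightarrow> 1 \<le> k \<longrightarrow> k < n \<longrightarrow> lam k > lam (k + 1)))
     \<longleftrightarrow> (\<forall>j\<in>{1..n}. lam j \<noteq> 1)"
proof
  assume unique: "(\<exists>!k. is_kmin lam n k) \<and> (\<forall>k. is_kmin lam n k \<longrightarrow> 1 \<le> k \<longrightarrow> k < n \<longrightarrow> lam k > lam (k + 1))"
  show "\<forall>j\<in>{1..n}. lam j \<noteq> 1"
  proof (intro ballI notI)
    fix j assume "j \<in> {1..n}" "lam j = 1"
    then obtain K0 K1 where K: "is_kmin lam n K0" "is_kmin lam n K1" "K0 < j" "j \<le> K1"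
      using two_kmins_if_eigenvalue_one[OF mono] by blast
    have "K0 = K1"
      using the1_equality[of "is_kmin lam n", OF conjunct1[OF unique]] K(1,2) by metis
    then show False using K(3,4) by simp
  qed
next
  assume ne1: "\<forall>j\<in>{1..n}. lam j \<noteq> 1"
  have no_less: "\<not> k < k'" if "is_kmin lam n k" "is_kmin lam n k'" for k k'
  proof
    assume "k < k'"
    then have "k' \<in> {1..n}" "k' \<in> {1..k'}" "k' \<in> {Suc k..n}"
      using is_kminD(1)[OF mono that(2)] by auto
    then have "lam k' = 1"
      using is_kminD(2)[OF mono that(2)] is_kminD(3)[OF mono that(1)] by (simp add: order_antisym)
    then show False using ne1 \<open>k' \<in> {1..n}\<close> by blast
  qed
  obtain K where K: "is_kmin lam n K"
    using mono by (rule is_kmin_threshold[of n lam "(<) 1"]) auto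
  have "\<exists>!k. is_kmin lam n k"
  proof (rule ex1I[of _ K])
    show "k = K" if "is_kmin lam n k" for k
      using no_less[OF that K] no_less[OF K that] by simp
  qed (rule K)
  moreover have "lam k > lam (k + 1)" if k: "is_kmin lam n k" "1 \<le> k" "k < n" for k
  proof -
    have "1 \<le> lam k" "lam (k + 1) \<le> 1"
      using is_kminD(2,3)[OF mono k(1)] k(2,3) by auto
    moreover have "lam k \<noteq> 1" "lam (k + 1) \<noteq> 1" using ne1 k(2,3) by auto
    ultimately show ?thesis by linarith
  qed
  ultimately show "(\<exists>!k. is_kmin lam n k) \<and> (\<forall>k. is_kmin lam n k \<longrightarrow> 1 \<le> k \<longrightarrow> k < n \<longrightarrow> lam k > lam (k + 1))"
    by blast
qed

definition orthonormal_upto :: "(nat \<Rightarrow> 'a::real_inner) \<Rightarrow> nat \<Rightarrow> bool" where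
  "orthonormal_upto U n \<longleftrightarrow> (\<forall>i\<in>{1..n}. \<forall>j\<in>{1..n}. U i \<bullet> U j = (if i = j then 1 else 0))"

lemma orthonormal_uptoD:
  "orthonormal_upto U n \<Longrightarrow> i \<in> {1..n} \<Longrightarrow> j \<in> {1..n} \<Longrightarrow> U i \<bullet> U j = (if i = j then 1 else 0)"
  by (simp add: orthonormal_upto_def)

lemma orthonormal_upto_expansion:
  fixes U :: "nat \<Rightarrow> 'a::euclidean_space"
  assumes orth: "orthonormal_upto U DIM('a)"
  shows "x = (\<Sum>j=1..DIM('a). (U j \<bullet> x) *\<^sub>R U j)"
proof -
  define n where "n = DIM('a)"
  define S where "S = U ` {1..n}"
  have unit: "U i \<bullet> U i = 1" if "i \<in> {1..n}" for i
    using orthonormal_uptoD[OF orth] that by (simp add: n_def)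
  have "inj_on U {1..n}"
    by (rule inj_onI) (metis orthonormal_uptoD[OF orth] n_def unit zero_neq_one)
  then have "card S = n" by (simp add: S_def card_image)
  moreover have "pairwise orthogonal S"
    using orthonormal_uptoD[OF orth] by (auto simp: pairwise_def S_def orthogonal_def n_def)
  moreover have "0 \<notin> S"
  proof
    assume "0 \<in> S"
    then obtain i where "i \<in> {1..n}" "U i = 0" by (auto simp: S_def)
    then show False using unit[of i] by simp
  qed
  ultimately have "UNIV \<subseteq> span S"
    by (intro card_ge_dim_independent pairwise_orthogonal_independent) (auto simp: n_def)
  define y where "y = x - (\<Sum>j=1..n. (U j \<bullet> x) *\<^sub>R U j)"
  have "y \<bullet> U i = 0" if i: "i \<in> {1..n}" for i
  proof -
    have "(\<Sum>j=1..n. (U j \<bullet> x) * (U j \<bullet> U i)) = (\<Sum>j=1..n. if j = i then U i \<bullet> x else 0)"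
      by (rule sum.cong) (use orthonormal_uptoD[OF orth] i n_def in auto)
    also have "\<dots> = U i \<bullet> x" using i by simp
    finally show ?thesis by (simp add: y_def inner_diff_left inner_sum_left inner_commute[of x])
  qed
  then have "orthogonal y u" if "u \<in> S" for u
    using that by (auto simp: S_def orthogonal_def)
  then have "orthogonal y y"
    using orthogonal_to_span[of y S y] \<open>UNIV \<subseteq> span S\<close> by auto
  then show ?thesis by (simp add: y_def n_def orthogonal_def)
qed

lemma orthonormal_upto_expansion_cart:
  fixes U :: "nat \<Rightarrow> real^'m"
  assumes "orthonormal_upto U CARD('m)"
  shows "x = (\<Sum>j=1..CARD('m). (U j \<bullet> x) *\<^sub>R U j)"
  using orthonormal_upto_expansion[of U x] assms by simp

lemma matrix_eq_on_orthonormal: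
  fixes A B :: "real^'m^'n" and U :: "nat \<Rightarrow> real^'m"
  assumes orth: "orthonormal_upto U CARD('m)" and eq: "\<And>j. j \<in> {1..CARD('m)} \<Longrightarrow> A *v U j = B *v U j"
  shows "A = B"
  unfolding matrix_eq
proof
  fix x
  have "A *v x = (\<Sum>j=1..CARD('m). (U j \<bullet> x) *\<^sub>R (A *v U j))"
    by (subst orthonormal_upto_expansion_cart[OF orth, of x]) (simp add: vec.sum matrix_vector_mult_scaleR)
  also have "\<dots> = (\<Sum>j=1..CARD('m). (U j \<bullet> x) *\<^sub>R (B *v U j))" by (simp add: eq)
  also have "\<dots> = B *v x"
    by (subst (2) orthonormal_upto_expansion_cart[OF orth, of x]) (simp add: vec.sum matrix_vector_mult_scaleR)
  finally show "A *v x = B *v x" .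
qed

lemma outer_mult_vec: "outer u v *v x = (v \<bullet> x) *\<^sub>R u"
  by (simp add: vec_eq_iff matrix_vector_mult_def outer_def inner_vec_def sum_distrib_left ac_simps)

lemma inner_outer: "(A :: real^'m^'m) \<bullet> outer u v = u \<bullet> (A *v v)"
  by (simp add: inner_vec_def matrix_vector_mult_def outer_def sum_distrib_left ac_simps)

lemma sum_matrix_vector_mult: "(\<Sum>a\<in>S. A a) *v (x :: real^'m) = (\<Sum>a\<in>S. A a *v x)"
  by (induction S rule: infinite_finite_induct) (auto simp: matrix_vector_mult_add_rdistrib)

lemma projU_mult_vec: "projU U k *v x = (\<Sum>j=1..k. (U j \<bullet> x) *\<^sub>R U j)"
  by (simp add: projU_def sum_matrix_vector_mult outer_mult_vec)

lemma projU_mult_orthonormal: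
  assumes "orthonormal_upto U n" "k \<le> n" "i \<in> {1..n}"
  shows "projU U k *v U i = (if i \<le> k then U i else 0)"
proof -
  have "projU U k *v U i = (\<Sum>j=1..k. if j = i then U i else 0)"
    unfolding projU_mult_vec by (rule sum.cong) (use assms in \<open>auto simp: orthonormal_upto_def\<close>)
  then show ?thesis using assms(3) by simp
qed

lemma mat_1_eq_projU:
  fixes U :: "nat \<Rightarrow> real^'m"
  assumes "orthonormal_upto U CARD('m)"
  shows "mat 1 = projU U CARD('m)"
  by (rule matrix_eq_on_orthonormal[OF assms]) (simp add: projU_mult_orthonormal[OF assms])

lemma transpose_projU: "transpose (projU U k) = projU U k"
  by (simp add: vec_eq_iff transpose_def projU_def outer_def mult.commute)

lemma projU_idempotent:
  fixes U :: "nat \<Rightarrow> real^'m"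
  assumes orth: "orthonormal_upto U CARD('m)" and k: "k \<le> CARD('m)"
  shows "projU U k ** projU U k = projU U k"
proof (rule matrix_eq_on_orthonormal[OF orth])
  fix j assume "j \<in> {1..CARD('m)}"
  then show "(projU U k ** projU U k) *v U j = projU U k *v U j"
    by (simp add: projU_mult_orthonormal[OF orth k] flip: matrix_vector_mul_assoc)
qed

lemma projU_in_Sm:
  fixes U :: "nat \<Rightarrow> real^'m"
  assumes "orthonormal_upto U CARD('m)" "k \<le> CARD('m)"
  shows "(projU U k, (mat 1 - projU U k) *v t) \<in> Sm"
  using projU_idempotent[OF assms] transpose_projU[of U k]
  by (simp add: Sm_def matrix_vector_mult_diff_rdistrib vec.diff matrix_vector_mul_assoc)

lemma inner_symmetric_matrix:
  assumes "R = transpose R"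
  shows "x \<bullet> (R *v y) = (R *v x) \<bullet> (y :: real^'m)"
  by (metis assms dot_lmul_matrix vector_transpose_matrix)

lemma proj_inner_self:
  assumes "R = transpose R" "R ** R = R"
  shows "(R *v x) \<bullet> (R *v x) = x \<bullet> (R *v (x :: real^'m))"
  by (metis assms inner_symmetric_matrix matrix_vector_mul_assoc)

lemma proj_complement_inner_self:
  assumes "R = transpose R" "R ** R = R"
  shows "(x - R *v x) \<bullet> (x - R *v x) = x \<bullet> x - x \<bullet> (R *v (x :: real^'m))"
  using proj_inner_self[OF assms, of x]
  by (simp add: inner_diff_left inner_diff_right inner_commute[of "R *v x" x])

lemma proj_quadratic_form_bounds:
  assumes "R = transpose R" "R ** R = R"
  shows "0 \<le> x \<bullet> (R *v x)" "x \<bullet> (R *v x) \<le> x \<bullet> (x :: real^'m)"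
  using proj_inner_self[OF assms, of x] proj_complement_inner_self[OF assms, of x]
    inner_ge_zero[of "R *v x"] inner_ge_zero[of "x - R *v x"] by linarith+

lemma proj_fixes_if_quadratic_form_eq:
  assumes "R = transpose R" "R ** R = R" "x \<bullet> (R *v x) = x \<bullet> (x :: real^'m)"
  shows "R *v x = x"
  using proj_complement_inner_self[OF assms(1,2), of x] assms(3) by simp

lemma proj_annihilates_if_quadratic_form_zero:
  assumes "R = transpose R" "R ** R = R" "x \<bullet> (R *v x) = 0"
  shows "R *v x = (0 :: real^'m)"
  using proj_inner_self[OF assms(1,2), of x] assms(3) by simp

lemma proj_diag_eq_row_norm:
  fixes R :: "real^'m^'m"
  assumes "R = transpose R" "R ** R = R"
  shows "R $ i $ i = (\<Sum>k\<in>UNIV. (R $ i $ k)\<^sup>2)"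
proof -
  have "R $ i $ i = (R ** R) $ i $ i" using assms(2) by simp
  also have "\<dots> = (\<Sum>k\<in>UNIV. R $ i $ k * R $ k $ i)" by (simp add: matrix_matrix_mult_def)
  also have "\<dots> = (\<Sum>k\<in>UNIV. (R $ i $ k)\<^sup>2)"
    using arg_cong[OF assms(1), of "\<lambda>A. A $ _ $ i"] by (simp add: transpose_def power2_eq_square)
  finally show ?thesis .
qed

lemma proj_inner_self_eq_trace:
  assumes "R = transpose R" "R ** R = R"
  shows "R \<bullet> R = trace (R :: real^'m^'m)"
  by (simp add: trace_def inner_vec_def proj_diag_eq_row_norm[OF assms] power2_eq_square)

lemma proj_diag_le_1:
  fixes R :: "real^'m^'m"
  assumes "R = transpose R" "R ** R = R"
  shows "R $ i $ i \<le> 1"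
proof -
  have "(R $ i $ i)\<^sup>2 \<le> (\<Sum>k\<in>UNIV. (R $ i $ k)\<^sup>2)"
    by (rule member_le_sum[of i UNIV "\<lambda>k. (R $ i $ k)\<^sup>2"]) simp_all
  also have "\<dots> = R $ i $ i" by (rule proj_diag_eq_row_norm[OF assms, symmetric])
  finally have "(R $ i $ i)\<^sup>2 \<le> R $ i $ i" .
  show ?thesis
  proof (rule ccontr)
    assume "\<not> R $ i $ i \<le> 1"
    then have "R $ i $ i * 1 < R $ i $ i * R $ i $ i" by (intro mult_strict_left_mono) auto
    then show False using \<open>(R $ i $ i)\<^sup>2 \<le> R $ i $ i\<close> by (simp add: power2_eq_square)
  qed
qed

lemma trace_eq_sum_orthonormal:
  fixes A :: "real^'m^'m" and U :: "nat \<Rightarrow> real^'m"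
  assumes "orthonormal_upto U CARD('m)"
  shows "trace A = (\<Sum>j=1..CARD('m). U j \<bullet> (A *v U j))"
proof -
  have "trace A = A \<bullet> mat 1"
    by (simp add: trace_def inner_vec_def mat_def if_distrib cong: if_cong)
  then show ?thesis
    by (simp add: mat_1_eq_projU[OF assms] projU_def inner_sum_right inner_outer)
qed

lemma frob2_eq_norm_sq: "frob2 A = (norm A)\<^sup>2"
  by (simp add: frob2_def power2_norm_eq_inner trace_def matrix_matrix_mult_def transpose_def inner_vec_def)

lemma Sm_norm_fst_le:
  assumes "p \<in> (Sm :: ((real^'m^'m) \<times> (real^'m)) set)"
  shows "(norm (fst p))\<^sup>2 \<le> CARD('m)"
proof -
  obtain R \<theta> where p: "p = (R, \<theta>)" "R = transpose R" "R ** R = R"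
    using assms by (auto simp: Sm_def)
  have "(norm R)\<^sup>2 = trace R" by (simp add: power2_norm_eq_inner proj_inner_self_eq_trace[OF p(2,3)])
  also have "\<dots> \<le> (\<Sum>i\<in>(UNIV :: 'm set). 1)"
    unfolding trace_def by (rule sum_mono) (rule proj_diag_le_1[OF p(2,3)])
  finally show ?thesis using p(1) by simp
qed

lemma min_0_le_mult: "0 \<le> q \<Longrightarrow> q \<le> 1 \<Longrightarrow> min 0 c \<le> c * (q :: real)"
  by (cases "0 \<le> c") (simp_all add: min_def mult_left_mono_neg[of q 1 c, simplified])

lemma mult_eq_min_0_imp:
  fixes c q :: real
  assumes "c \<noteq> 0" "0 \<le> q" "q \<le> 1" "c * q = min 0 c"
  shows "q = (if c < 0 then 1 else 0)"
  using assms by (auto simp: min_def split: if_splits)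

lemma norm_diff_power2: "(norm (a - b))\<^sup>2 = a \<bullet> a - 2 * (a \<bullet> b) + b \<bullet> (b :: 'a::real_inner)"
  by (simp add: power2_norm_eq_inner inner_diff_left inner_diff_right inner_commute[of b a])

lemma le_1_plus_power2: "(x :: real) \<le> 1 + x\<^sup>2"
proof -
  have "2 * x \<le> x\<^sup>2 + 1" using zero_le_power2[of "x - 1"] by (simp add: power2_diff)
  then show ?thesis using zero_le_power2[of x] by linarith
qed

locale spectral_posterior =
  fixes P :: "((real^'m^'m) \<times> (real^'m)) measure"
    and U :: "nat \<Rightarrow> real^'m" and lam :: "nat \<Rightarrow> real"
  assumes prob_space_P: "prob_space P"
    and sets_P: "sets P = sets borel"
    and supp: "AE q in P. q \<in> Sm"
    and integ: "integrable P (\<lambda>q. (norm (snd q))\<^sup>2)"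
    and orth: "orthonormal_upto U CARD('m)"
    and antimono: "antimono_on {1..CARD('m)} lam"
    and decomp: "2 *\<^sub>R (\<integral>q. fst q \<partial>P) - outer (\<integral>q. snd q \<partial>P) (\<integral>q. snd q \<partial>P)
                   = (\<Sum>j=1..CARD('m). lam j *\<^sub>R outer (U j) (U j))"
begin

sublocale prob_space P by (rule prob_space_P)

definition mean_proj :: "real^'m^'m" where "mean_proj = (\<integral>q. fst q \<partial>P)"

definition mean_offset :: "real^'m" where "mean_offset = (\<integral>q. snd q \<partial>P)"

definition risk_const :: real where
  "risk_const = (\<integral>q. (norm (fst q))\<^sup>2 + (norm (snd q))\<^sup>2 \<partial>P) - mean_offset \<bullet> mean_offset"

definition spectral_risk :: "real^'m^'m \<Rightarrow> real" where
  "spectral_risk R = (\<Sum>j=1..CARD('m). (1 - lam j) * (U j \<bullet> (R *v U j)))"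

definition candidate :: "nat \<Rightarrow> (real^'m^'m) \<times> (real^'m)" where
  "candidate k = (projU U k, (mat 1 - projU U k) *v mean_offset)"

lemma borel_measurable_continuous:
  "continuous_on UNIV f \<Longrightarrow> f \<in> borel_measurable P"
  using borel_measurable_continuous_onI measurable_cong_sets[OF sets_P refl] by blast

lemma integrable_fst: "integrable P fst"
  and integrable_norm_fst_sq: "integrable P (\<lambda>q. (norm (fst q))\<^sup>2)"
proof -
  have bound: "AE q in P. (norm (fst q))\<^sup>2 \<le> CARD('m)"
    using supp by eventually_elim (rule Sm_norm_fst_le)
  show "integrable P fst"
  proof (rule integrable_const_bound[where B="sqrt CARD('m)"])
    show "AE q in P. norm (fst q) \<le> sqrt CARD('m)"
      using bound by eventually_elim (simp add: real_le_rsqrt)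
  qed (intro borel_measurable_continuous continuous_intros)
  show "integrable P (\<lambda>q. (norm (fst q))\<^sup>2)"
    by (rule integrable_const_bound[where B="real CARD('m)"])
       (use bound in auto, intro borel_measurable_continuous continuous_intros)
qed

lemma integrable_snd: "integrable P snd"
proof (rule Bochner_Integration.integrable_bound[where f="\<lambda>q. 1 + (norm (snd q))\<^sup>2"])
  show "integrable P (\<lambda>q. 1 + (norm (snd q))\<^sup>2)" using integ by simp
  show "AE q in P. norm (snd q) \<le> norm (1 + (norm (snd q))\<^sup>2)"
    by (intro AE_I2) (simp add: le_1_plus_power2)
qed (intro borel_measurable_continuous continuous_intros)

lemma post_risk_expand:
  "post_risk P (R, \<theta>) = R \<bullet> R + \<theta> \<bullet> \<theta> - 2 * (R \<bullet> mean_proj) - 2 * (\<theta> \<bullet> mean_offset)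
     + (\<integral>q. (norm (fst q))\<^sup>2 + (norm (snd q))\<^sup>2 \<partial>P)"
proof -
  have loss: "loss (R, \<theta>) q = (R \<bullet> R + \<theta> \<bullet> \<theta> - 2 * (R \<bullet> fst q) - 2 * (\<theta> \<bullet> snd q))
      + ((norm (fst q))\<^sup>2 + (norm (snd q))\<^sup>2)" for q
    unfolding loss_def frob2_eq_norm_sq fst_conv snd_conv norm_diff_power2
    by (simp add: power2_norm_eq_inner)
  have "post_risk P (R, \<theta>) = (\<integral>q. R \<bullet> R + \<theta> \<bullet> \<theta> - 2 * (R \<bullet> fst q) - 2 * (\<theta> \<bullet> snd q) \<partial>P)
      + (\<integral>q. (norm (fst q))\<^sup>2 + (norm (snd q))\<^sup>2 \<partial>P)"
    unfolding post_risk_def loss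
    by (rule Bochner_Integration.integral_add)
       (use integrable_fst integrable_snd integrable_norm_fst_sq integ in simp_all)
  also have "(\<integral>q. R \<bullet> R + \<theta> \<bullet> \<theta> - 2 * (R \<bullet> fst q) - 2 * (\<theta> \<bullet> snd q) \<partial>P)
      = R \<bullet> R + \<theta> \<bullet> \<theta> - 2 * (R \<bullet> mean_proj) - 2 * (\<theta> \<bullet> mean_offset)"
    using integrable_fst integrable_snd by (simp add: mean_proj_def mean_offset_def prob_space)
  finally show ?thesis .
qed

lemma post_risk_Sm:
  assumes "(R, \<theta>) \<in> Sm"
  shows "post_risk P (R, \<theta>) = spectral_risk R + (norm (\<theta> - (mat 1 - R) *v mean_offset))\<^sup>2 + risk_const"
proof -
  have sym: "R = transpose R" and idem: "R ** R = R" and R\<theta>: "R *v \<theta> = 0"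
    using assms by (auto simp: Sm_def)
  have "2 * (R \<bullet> mean_proj) = R \<bullet> (2 *\<^sub>R mean_proj)" by simp
  also have "2 *\<^sub>R mean_proj = (\<Sum>j=1..CARD('m). lam j *\<^sub>R outer (U j) (U j)) + outer mean_offset mean_offset"
    using decomp by (simp add: mean_proj_def mean_offset_def algebra_simps)
  finally have cross_proj: "2 * (R \<bullet> mean_proj)
      = (\<Sum>j=1..CARD('m). lam j * (U j \<bullet> (R *v U j))) + mean_offset \<bullet> (R *v mean_offset)"
    by (simp add: inner_add_right inner_sum_right inner_outer)
  have proj_sq: "R \<bullet> R = (\<Sum>j=1..CARD('m). U j \<bullet> (R *v U j))"
    using proj_inner_self_eq_trace[OF sym idem] trace_eq_sum_orthonormal[OF orth] by simp
  have "(mat 1 - R) *v mean_offset = mean_offset - R *v mean_offset"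
    by (simp add: matrix_vector_mult_diff_rdistrib)
  moreover have "\<theta> \<bullet> (R *v mean_offset) = 0"
    using inner_symmetric_matrix[OF sym, of \<theta> mean_offset] R\<theta> by simp
  ultimately have offset_sq: "(norm (\<theta> - (mat 1 - R) *v mean_offset))\<^sup>2
      = \<theta> \<bullet> \<theta> - 2 * (\<theta> \<bullet> mean_offset) + mean_offset \<bullet> mean_offset - mean_offset \<bullet> (R *v mean_offset)"
    using proj_complement_inner_self[OF sym idem, of mean_offset]
    by (simp add: norm_diff_power2 inner_diff_right)
  have "spectral_risk R = (\<Sum>j=1..CARD('m). U j \<bullet> (R *v U j)) - (\<Sum>j=1..CARD('m). lam j * (U j \<bullet> (R *v U j)))"
    by (simp add: spectral_risk_def left_diff_distrib sum_subtractf)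
  then show ?thesis
    unfolding post_risk_expand risk_const_def using cross_proj proj_sq offset_sq by linarith
qed

lemma spectral_term_bounds:
  assumes "(R, \<theta>) \<in> Sm" "j \<in> {1..CARD('m)}"
  shows "0 \<le> U j \<bullet> (R *v U j)" "U j \<bullet> (R *v U j) \<le> 1"
proof -
  have sym: "R = transpose R" and idem: "R ** R = R" using assms(1) by (auto simp: Sm_def)
  have "U j \<bullet> U j = 1" using orthonormal_uptoD[OF orth assms(2) assms(2)] by simp
  then show "0 \<le> U j \<bullet> (R *v U j)" "U j \<bullet> (R *v U j) \<le> 1"
    using proj_quadratic_form_bounds[OF sym idem, of "U j"] by simp_all
qed

lemma spectral_risk_lower_bound:
  assumes "(R, \<theta>) \<in> Sm"
  shows "(\<Sum>j=1..CARD('m). min 0 (1 - lam j)) \<le> spectral_risk R"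
  unfolding spectral_risk_def
  by (rule sum_mono) (intro min_0_le_mult spectral_term_bounds[OF assms])

lemma spectral_risk_eq_lower_bound_termwise:
  assumes Sm: "(R, \<theta>) \<in> Sm" and eq: "spectral_risk R = (\<Sum>j=1..CARD('m). min 0 (1 - lam j))"
    and j: "j \<in> {1..CARD('m)}"
  shows "(1 - lam j) * (U j \<bullet> (R *v U j)) = min 0 (1 - lam j)"
proof -
  have nonneg: "\<forall>i\<in>{1..CARD('m)}. 0 \<le> (1 - lam i) * (U i \<bullet> (R *v U i)) - min 0 (1 - lam i)"
    using min_0_le_mult spectral_term_bounds[OF Sm] by (simp add: le_diff_eq)
  have "(\<Sum>i=1..CARD('m). (1 - lam i) * (U i \<bullet> (R *v U i)) - min 0 (1 - lam i)) = 0"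
    using eq by (simp add: spectral_risk_def sum_subtractf)
  then have "\<forall>i\<in>{1..CARD('m)}. (1 - lam i) * (U i \<bullet> (R *v U i)) - min 0 (1 - lam i) = 0"
    using sum_nonneg_eq_0_iff[of "{1..CARD('m)}" "\<lambda>i. (1 - lam i) * (U i \<bullet> (R *v U i)) - min 0 (1 - lam i)"]
      nonneg by simp
  then show ?thesis using j by simp
qed

lemma proj_eq_projU_if_spectral_risk_eq_lower_bound:
  assumes Sm: "(R, \<theta>) \<in> Sm" and eq: "spectral_risk R = (\<Sum>j=1..CARD('m). min 0 (1 - lam j))"
    and ne1: "\<forall>j\<in>{1..CARD('m)}. lam j \<noteq> 1"
    and K: "K \<le> CARD('m)" "\<forall>j\<in>{1..CARD('m)}. 1 < lam j \<longleftrightarrow> j \<le> K"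
  shows "R = projU U K"
proof (rule matrix_eq_on_orthonormal[OF orth])
  fix j assume j: "j \<in> {1..CARD('m)}"
  have sym: "R = transpose R" and idem: "R ** R = R" using Sm by (auto simp: Sm_def)
  have unit: "U j \<bullet> U j = 1" using orthonormal_uptoD[OF orth j j] by simp
  have "U j \<bullet> (R *v U j) = (if 1 - lam j < 0 then 1 else 0)"
    using ne1 j spectral_term_bounds[OF Sm j] spectral_risk_eq_lower_bound_termwise[OF Sm eq j]
    by (intro mult_eq_min_0_imp) auto
  then have "R *v U j = (if j \<le> K then U j else 0)"
    using proj_fixes_if_quadratic_form_eq[OF sym idem] proj_annihilates_if_quadratic_form_zero[OF sym idem]
      K(2) j unit by (auto split: if_splits)
  then show "R *v U j = projU U K *v U j" by (simp add: projU_mult_orthonormal[OF orth K(1) j])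
qed

lemma post_risk_lower_bound:
  assumes "p \<in> Sm"
  shows "(\<Sum>j=1..CARD('m). min 0 (1 - lam j)) + risk_const \<le> post_risk P p"
proof -
  obtain R \<theta> where p: "p = (R, \<theta>)" by fastforce
  show ?thesis
    using post_risk_Sm[of R \<theta>] spectral_risk_lower_bound[of R \<theta>] assms p
    by (simp add: add_increasing2)
qed

lemma spectral_risk_projU:
  assumes k: "k \<le> CARD('m)"
  shows "spectral_risk (projU U k) = kobj lam k"
proof -
  have "spectral_risk (projU U k) = (\<Sum>j=1..CARD('m). if j \<le> k then 1 - lam j else 0)"
    unfolding spectral_risk_def
    by (rule sum.cong) (simp_all add: projU_mult_orthonormal[OF orth k] orthonormal_uptoD[OF orth])
  also have "\<dots> = (\<Sum>j\<in>{j\<in>{1..CARD('m)}. j \<le> k}. 1 - lam j)"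
    by (rule sum.inter_filter[symmetric]) simp
  also have "{j\<in>{1..CARD('m)}. j \<le> k} = {1..k}" using k by auto
  finally show ?thesis by (simp add: kobj_def sum_subtractf)
qed

lemma candidate_in_Sm: "k \<le> CARD('m) \<Longrightarrow> candidate k \<in> Sm"
  unfolding candidate_def by (rule projU_in_Sm[OF orth])

lemma post_risk_candidate: "k \<le> CARD('m) \<Longrightarrow> post_risk P (candidate k) = kobj lam k + risk_const"
  using post_risk_Sm[OF candidate_in_Sm[unfolded candidate_def]] spectral_risk_projU
  by (simp add: candidate_def)

lemma kobj_eq_lower_bound_if_is_kmin:
  "is_kmin lam CARD('m) k \<Longrightarrow> kobj lam k = (\<Sum>j=1..CARD('m). min 0 (1 - lam j))"
  using kobj_eq_lower_bound_iff unfolding is_kmin_iff[OF antimono] by blast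

lemma kmin_candidate_minimizes:
  assumes "is_kmin lam CARD('m) k"
  shows "candidate k \<in> Sm \<and> (\<forall>p\<in>Sm. post_risk P (candidate k) \<le> post_risk P p)"
proof -
  have k: "k \<le> CARD('m)" using assms by (simp add: is_kmin_def)
  show ?thesis
    using candidate_in_Sm[OF k] post_risk_candidate[OF k] kobj_eq_lower_bound_if_is_kmin[OF assms] post_risk_lower_bound
    by simp
qed

lemma minimizer_eq_candidate:
  assumes ne1: "\<forall>j\<in>{1..CARD('m)}. lam j \<noteq> 1"
    and K: "is_kmin lam CARD('m) K" "\<forall>j\<in>{1..CARD('m)}. 1 < lam j \<longleftrightarrow> j \<le> K"
    and p: "p \<in> Sm" "\<forall>p'\<in>Sm. post_risk P p \<le> post_risk P p'"
  shows "p = candidate K"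
proof -
  define V where "V = (\<Sum>j=1..CARD('m). min 0 (1 - lam j))"
  obtain R \<theta> where pR: "p = (R, \<theta>)" by fastforce
  have Sm: "(R, \<theta>) \<in> Sm" using p(1) pR by simp
  have K_le: "K \<le> CARD('m)" using K(1) by (simp add: is_kmin_def)
  have "post_risk P (R, \<theta>) \<le> V + risk_const"
    using p(2) pR candidate_in_Sm[OF K_le] post_risk_candidate[OF K_le] kobj_eq_lower_bound_if_is_kmin[OF K(1)]
    unfolding V_def by fastforce
  then have "spectral_risk R + (norm (\<theta> - (mat 1 - R) *v mean_offset))\<^sup>2 \<le> V"
    using post_risk_Sm[OF Sm] by simp
  then have "spectral_risk R = V" "(norm (\<theta> - (mat 1 - R) *v mean_offset))\<^sup>2 = 0"
    using spectral_risk_lower_bound[OF Sm, folded V_def]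
      zero_le_power2[of "norm (\<theta> - (mat 1 - R) *v mean_offset)"] by linarith+
  then have "R = projU U K" "\<theta> = (mat 1 - R) *v mean_offset"
    using proj_eq_projU_if_spectral_risk_eq_lower_bound[OF Sm _ ne1 K_le K(2)] V_def by simp_all
  then show ?thesis using pR by (simp add: candidate_def)
qed

lemma unique_minimizer_iff:
  "(\<exists>!p. p \<in> Sm \<and> (\<forall>p'\<in>Sm. post_risk P p \<le> post_risk P p')) \<longleftrightarrow> (\<forall>j\<in>{1..CARD('m)}. lam j \<noteq> 1)"
proof
  assume unique: "\<exists>!p. p \<in> Sm \<and> (\<forall>p'\<in>Sm. post_risk P p \<le> post_risk P p')"
  show "\<forall>j\<in>{1..CARD('m)}. lam j \<noteq> 1"
  proof (intro ballI notI)
    fix j assume j: "j \<in> {1..CARD('m)}" "lam j = 1"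
    then obtain K0 K1 where K: "is_kmin lam CARD('m) K0" "is_kmin lam CARD('m) K1" "K0 < j" "j \<le> K1"
      using two_kmins_if_eigenvalue_one[OF antimono] by blast
    have "K0 \<le> CARD('m)" "K1 \<le> CARD('m)" using K(1,2) by (simp_all add: is_kmin_def)
    then have "projU U K0 *v U j = 0" "projU U K1 *v U j = U j"
      using projU_mult_orthonormal[OF orth _ j(1)] K(3,4) by auto
    moreover have "U j \<noteq> 0" using orthonormal_uptoD[OF orth j(1) j(1)] by auto
    ultimately have "candidate K0 \<noteq> candidate K1" by (auto simp: candidate_def)
    moreover have "candidate K0 = candidate K1"
      using unique kmin_candidate_minimizes[OF K(1)] kmin_candidate_minimizes[OF K(2)] by blast
    ultimately show False by simp
  qed
next
  assume ne1: "\<forall>j\<in>{1..CARD('m)}. lam j \<noteq> 1"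
  obtain K where K: "is_kmin lam CARD('m) K" "\<forall>j\<in>{1..CARD('m)}. 1 < lam j \<longleftrightarrow> j \<le> K"
    using antimono by (rule is_kmin_threshold[of _ lam "(<) 1"]) auto
  show "\<exists>!p. p \<in> Sm \<and> (\<forall>p'\<in>Sm. post_risk P p \<le> post_risk P p')"
    using kmin_candidate_minimizes[OF K(1)] minimizer_eq_candidate[OF ne1 K] by blast
qed

end

theorem theorem3:
  fixes P :: "((real^'m^'m) \<times> (real^'m)) measure"
    and U :: "nat \<Rightarrow> real^'m" and lam :: "nat \<Rightarrow> real"
  assumes prob: "prob_space P"
    and sets_P: "sets P = sets borel"
    and supp: "AE q in P. q \<in> Sm"
    and integ: "integrable P (\<lambda>q. (norm (snd q))\<^sup>2)"
    and orth: "\<forall>i\<in>{1..CARD('m)}. \<forall>j\<in>{1..CARD('m)}. U i \<bullet> U j = (if i = j then 1 else 0)"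
    and sorted: "\<forall>i\<in>{1..CARD('m)}. \<forall>j\<in>{1..CARD('m)}. i \<le> j \<longrightarrow> lam j \<le> lam i"
    and decomp: "2 *\<^sub>R (\<integral>q. fst q \<partial>P) - outer (\<integral>q. snd q \<partial>P) (\<integral>q. snd q \<partial>P)
                   = (\<Sum>j=1..CARD('m). lam j *\<^sub>R outer (U j) (U j))"
  shows "(\<forall>k. is_kmin lam CARD('m) k \<longrightarrow> (projU U k, (mat 1 - projU U k) *v (\<integral>q. snd q \<partial>P)) \<in> Sm \<and> (\<forall>p\<in>Sm. post_risk P (projU U k, (mat 1 - projU U k) *v (\<integral>q. snd q \<partial>P)) \<le> post_risk P p))
       \<and> ((\<exists>!p. p \<in> Sm \<and> (\<forall>p'\<in>Sm. post_risk P p \<le> post_risk P p'))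
          \<longleftrightarrow> ((\<exists>!k. is_kmin lam CARD('m) k) \<and>
               (\<forall>k. is_kmin lam CARD('m) k \<longrightarrow> 1 \<le> k \<longrightarrow> k < CARD('m) \<longrightarrow> lam k > lam (k + 1))))"
proof -
  interpret spectral_posterior P U lam
    by (intro spectral_posterior.intro) (simp_all add: assms orthonormal_upto_def monotone_on_def)
  show ?thesis
    using kmin_candidate_minimizes unique_minimizer_iff unique_kmin_iff[OF antimono]
    unfolding candidate_def mean_offset_def by simp
qed

end
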